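(* Fix integers $c\ge2$, $k\ge2$. Let $P$ be the RAM program that, on a dataset $x$ with $n=|x|$, performs independent biased coin flips where flip number $i+1$ ($i=0,1,2,\dots$) succeeds with probability $\frac{1}{(\max\{n-i,0\}+k)^c}$, stops at the first success, and outputs the number $\hat y$ of unsuccessful flips preceding it. Then $$\Pr\Big[\hat y<\frac n2\Big]\le O\!\left(\frac{1}{n^{c-1}}\right).$$
   Context: $n=|x|$ is the number of records in the input dataset, which the RAM program can read directly. *)

theory Defs
  imports "HOL-Analysis.Analysis" "HOL-Library.Landau_Symbols"
begin

text \<open>Success probability of flip number i+1 (i = 0,1,2,...) on a dataset of size n:
  1 / (max{n-i,0} + k)^c.  Natural-number subtraction n - i is exactly max{n-i,0}.\<close>
definition flip_succ_prob :: "nat \<Rightarrow> nat \<Rightarrow> nat \<Rightarrow> nat \<Rightarrow> real" where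
  "flip_succ_prob c k n i = 1 / (real (n - i) + real k) ^ c"

text \<open>Probability that the program P outputs y: the first y flips (numbers 1..y)
  fail independently and flip number y+1 succeeds.\<close>
definition output_prob :: "nat \<Rightarrow> nat \<Rightarrow> nat \<Rightarrow> nat \<Rightarrow> real" where
  "output_prob c k n y =
     (\<Prod>i<y. 1 - flip_succ_prob c k n i) * flip_succ_prob c k n y"

definition prob_small_output :: "nat \<Rightarrow> nat \<Rightarrow> nat \<Rightarrow> real" where
  "prob_small_output c k n = (\<Sum>y\<in>{y::nat. real y < real n / 2}. output_prob c k n y)"

end

theory Submission
  imports Defs
begin

text \<open>An output \<open>y < n/2\<close> requires flip \<open>y + 1\<close> to succeed, and that flip still sees
  \<open>n - y + k \<ge> n/2\<close>, so its success probability is at most \<open>(2/n)^c\<close>. There are at most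
  \<open>n\<close> such outputs, so a union bound gives \<open>2^c / n^(c-1)\<close>.\<close>

lemma flip_succ_prob_nonneg: "0 \<le> flip_succ_prob c k n i"
  unfolding flip_succ_prob_def by simp

lemma flip_succ_prob_le_one:
  assumes "k \<ge> 1"
  shows "flip_succ_prob c k n i \<le> 1"
proof -
  have "1 \<le> (real (n - i) + real k) ^ c"
    using assms by (intro one_le_power) simp
  then show ?thesis
    unfolding flip_succ_prob_def by simp
qed

lemma flip_succ_prob_le_before_half:
  assumes "n \<ge> 1" and "real i < real n / 2"
  shows "flip_succ_prob c k n i \<le> 2 ^ c / real n ^ c"
proof -
  have "i < n"
    using assms by linarith
  then have "real n / 2 \<le> real (n - i) + real k"
    using assms by (simp add: of_nat_diff)
  then have "(real n / 2) ^ c \<le> (real (n - i) + real k) ^ c"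
    by (rule power_mono) simp
  moreover have "0 < (real n / 2) ^ c"
    using assms by simp
  ultimately have "flip_succ_prob c k n i \<le> 1 / (real n / 2) ^ c"
    unfolding flip_succ_prob_def by (intro divide_left_mono) auto
  also have "\<dots> = 2 ^ c / real n ^ c"
    by (simp add: power_divide)
  finally show ?thesis .
qed

lemma output_prob_nonneg:
  assumes "k \<ge> 1"
  shows "0 \<le> output_prob c k n y"
  unfolding output_prob_def
  using flip_succ_prob_nonneg flip_succ_prob_le_one[OF assms]
  by (intro mult_nonneg_nonneg prod_nonneg) (auto simp: algebra_simps)

lemma output_prob_le_flip_succ_prob:
  assumes "k \<ge> 1"
  shows "output_prob c k n y \<le> flip_succ_prob c k n y"
proof -
  have "(\<Prod>i<y. 1 - flip_succ_prob c k n i) \<le> 1"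
    using flip_succ_prob_nonneg flip_succ_prob_le_one[OF assms] by (intro prod_le_1) auto
  then show ?thesis
    unfolding output_prob_def
    using mult_right_mono[OF _ flip_succ_prob_nonneg[of c k n y]] by fastforce
qed

lemma prob_small_output_nonneg:
  assumes "k \<ge> 1"
  shows "0 \<le> prob_small_output c k n"
  unfolding prob_small_output_def using output_prob_nonneg[OF assms] by (intro sum_nonneg) auto

lemma prob_small_output_le:
  assumes "c \<ge> 1" and "k \<ge> 1" and "n \<ge> 1"
  shows "prob_small_output c k n \<le> 2 ^ c / real n ^ (c - 1)"
proof -
  define S where "S = {y::nat. real y < real n / 2}"
  have "S \<subseteq> {..<n}"
    unfolding S_def by auto
  then have "card S \<le> n"
    using card_mono[of "{..<n}" S] by simp
  have "output_prob c k n y \<le> 2 ^ c / real n ^ c" if "y \<in> S" for y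
    using that unfolding S_def
    by (intro order_trans[OF output_prob_le_flip_succ_prob[OF assms(2)]]
        flip_succ_prob_le_before_half[OF assms(3)]) simp
  then have "prob_small_output c k n \<le> real (card S) * (2 ^ c / real n ^ c)"
    unfolding prob_small_output_def S_def[symmetric] by (rule sum_bounded_above)
  also have "\<dots> \<le> real n * (2 ^ c / real n ^ c)"
    using \<open>card S \<le> n\<close> by (intro mult_right_mono) auto
  also have "\<dots> = 2 ^ c / real n ^ (c - 1)"
    using assms by (cases c) auto
  finally show ?thesis .
qed

theorem mainTheorem9:
  fixes c k :: nat
  assumes "c \<ge> 2" and "k \<ge> 2"
  shows "(\<lambda>n. prob_small_output c k n) \<in> O(\<lambda>n. 1 / real n ^ (c - 1))"
proof (rule bigoI[where c = "2 ^ c"])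
  have "norm (prob_small_output c k n) \<le> 2 ^ c * norm (1 / real n ^ (c - 1))" if "n \<ge> 1" for n
    using prob_small_output_le[of c k n] prob_small_output_nonneg[of k c n] assms that by simp
  then show "\<forall>\<^sub>F n in at_top. norm (prob_small_output c k n) \<le> 2 ^ c * norm (1 / real n ^ (c - 1))"
    unfolding eventually_at_top_linorder by blast
qed

end
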